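(* Consider the system $$\dot x=-y+x(x^3+xy^2)+\sum_{k=1}^2\varepsilon^k\Big(\lambda_kx+\sum_{i+j=4}a_{k,i,j}x^iy^j\Big),\qquad \dot y=x+y(x^3+xy^2)+\sum_{k=1}^2\varepsilon^k\Big(\lambda_ky+\sum_{i+j=4}b_{k,i,j}x^iy^j\Big),$$ and assume $a_{1,1,3}=b_{1,0,4}$, $a_{1,3,1}=b_{1,2,2}$, $b_{1,4,0}=\lambda_1=0$. Then for $z\in(0,3^{-1/3})$ the function $y_1$ has the form $$y_1(\theta,z)=\frac{1}{14580\,z^{11}(1-3z^3\sin\theta)^{4/3}}\Big(m_1(z)\ln(1-3z^3\sin\theta)+R(\theta,z)\Big),$$ where $R$ is a polynomial in $\cos\theta$, $\sin\theta$ and $z$, and $$m_1(z)=1620(b_{1,3,1}-a_{1,4,0})z^{12}+180(-a_{1,2,2}+2a_{1,4,0}+b_{1,1,3}-2b_{1,3,1})z^6+20(a_{1,2,2}-a_{1,0,4}-a_{1,4,0}-b_{1,1,3}+b_{1,3,1}).$$ Moreover the logarithmic term vanishes identically (i.e. $m_1\equiv0$ on $(0,3^{-1/3})$) if and only if $a_{1,2,2}=b_{1,1,3}$, $a_{1,4,0}=b_{1,3,1}$, and $a_{1,0,4}=0$.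
   Context: Write the system in polar coordinates $x=r\cos\theta,y=r\sin\theta$ and expand $dr/d\theta=F_0(\theta,r)+\varepsilon F_1(\theta,r)+O(\varepsilon^2)$, where $F_0=r^4\cos\theta$. Let $r(\theta,z)=z(1-3z^3\sin\theta)^{-1/3}$ (solution of $dr/d\theta=F_0$, $r(0)=z$) and $Y(\theta,z)=(1-3z^3\sin\theta)^{-4/3}$ (solution of $Y'=\partial_rF_0(\theta,r(\theta,z))Y$, $Y(0)=1$). Define $y_1(\theta,z)=Y(\theta,z)\int_0^\theta Y(s,z)^{-1}F_1(s,r(s,z))\,ds$. *)

theory Defs
  imports "HOL-Analysis.Analysis"
begin

definition fx :: "(nat \<Rightarrow> real) \<Rightarrow> (nat \<Rightarrow> nat \<Rightarrow> nat \<Rightarrow> real) \<Rightarrow> real \<Rightarrow> real \<Rightarrow> real \<Rightarrow> real" where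
  "fx lam a eps x y = - y + x * (x ^ 3 + x * y ^ 2)
     + (\<Sum>k\<in>{1, 2::nat}. eps ^ k * (lam k * x + (\<Sum>i\<in>{0..4::nat}. a k i (4 - i) * x ^ i * y ^ (4 - i))))"

definition fy :: "(nat \<Rightarrow> real) \<Rightarrow> (nat \<Rightarrow> nat \<Rightarrow> nat \<Rightarrow> real) \<Rightarrow> real \<Rightarrow> real \<Rightarrow> real \<Rightarrow> real" where
  "fy lam b eps x y = x + y * (x ^ 3 + x * y ^ 2)
     + (\<Sum>k\<in>{1, 2::nat}. eps ^ k * (lam k * y + (\<Sum>i\<in>{0..4::nat}. b k i (4 - i) * x ^ i * y ^ (4 - i))))"

definition rdot where
  "rdot lam a b eps \<theta> r =
     (let x = r * cos \<theta>; y = r * sin \<theta> in (x * fx lam a eps x y + y * fy lam b eps x y) / r)"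

definition thdot where
  "thdot lam a b eps \<theta> r =
     (let x = r * cos \<theta>; y = r * sin \<theta> in (x * fy lam b eps x y - y * fx lam a eps x y) / r ^ 2)"

text \<open>dr/d\<theta> = F0 + eps F1 + O(eps^2): F1 is the eps-derivative at eps = 0.\<close>

definition F1 :: "(nat \<Rightarrow> real) \<Rightarrow> (nat \<Rightarrow> nat \<Rightarrow> nat \<Rightarrow> real) \<Rightarrow> (nat \<Rightarrow> nat \<Rightarrow> nat \<Rightarrow> real) \<Rightarrow> real \<Rightarrow> real \<Rightarrow> real" where
  "F1 lam a b \<theta> r = deriv (\<lambda>eps. rdot lam a b eps \<theta> r / thdot lam a b eps \<theta> r) 0"

definition rsol :: "real \<Rightarrow> real \<Rightarrow> real" where
  "rsol \<theta> z = z * (1 - 3 * z ^ 3 * sin \<theta>) powr (-1/3)"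

definition Ysol :: "real \<Rightarrow> real \<Rightarrow> real" where
  "Ysol \<theta> z = (1 - 3 * z ^ 3 * sin \<theta>) powr (-4/3)"

text \<open>Signed integral from 0 to \<theta>.\<close>

definition y1 where
  "y1 lam a b \<theta> z = Ysol \<theta> z * (LBINT s=0..\<theta>. F1 lam a b s (rsol s z) / Ysol s z)"

definition m1 :: "(nat \<Rightarrow> nat \<Rightarrow> nat \<Rightarrow> real) \<Rightarrow> (nat \<Rightarrow> nat \<Rightarrow> nat \<Rightarrow> real) \<Rightarrow> real \<Rightarrow> real" where
  "m1 a b z = 1620 * (b 1 3 1 - a 1 4 0) * z ^ 12
     + 180 * (- a 1 2 2 + 2 * a 1 4 0 + b 1 1 3 - 2 * b 1 3 1) * z ^ 6
     + 20 * (a 1 2 2 - a 1 0 4 - a 1 4 0 - b 1 1 3 + b 1 3 1)"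

end

theory Submission
  imports Defs
begin

text \<open>For \<open>\<lambda>\<^sub>1 = 0\<close> the integrand \<open>F\<^sub>1(s, r(s,z)) / Y(s,z)\<close> of \<open>y\<^sub>1\<close> equals
  \<open>z\<^sup>4 G(s) - z\<^sup>7 cos s H(s) / (1 - 3z\<^sup>3 sin s)\<close>, where \<open>G\<close> and \<open>H\<close> are the radial and angular
  components of the first-order quartic perturbation. Under the three coefficient conditions this has
  the explicit antiderivative \<open>(m\<^sub>1(z) ln(1 - 3z\<^sup>3 sin s) + R\<^sub>0(cos s, sin s, z)) / (14580 z^11)\<close>
  with a polynomial \<open>R\<^sub>0\<close>, which is verified by differentiation: it reduces to a polynomial identity
  modulo \<open>cos\<^sup>2 + sin\<^sup>2 = 1\<close>. The fundamental theorem of calculus then gives the claimed form of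
  \<open>y\<^sub>1\<close> with \<open>R(\<theta>, z) = R\<^sub>0(cos \<theta>, sin \<theta>, z) - R\<^sub>0(1, 0, z)\<close>. Finally \<open>m\<^sub>1\<close> is a quadratic
  polynomial in \<open>z\<^sup>6\<close>, so it vanishes on an interval iff its three coefficients do.\<close>

definition cs_monomials :: "(real \<times> nat \<times> nat \<times> nat) list \<Rightarrow> real \<Rightarrow> real \<Rightarrow> real" where
  "cs_monomials ms t z = (\<Sum>(a, i, j, k)\<leftarrow>ms. a * cos t ^ i * sin t ^ j * z ^ k)"

definition cos_sin_poly :: "(real \<Rightarrow> real \<Rightarrow> real) \<Rightarrow> bool" where
  "cos_sin_poly f \<longleftrightarrow> (\<exists>ms. \<forall>t z. f t z = cs_monomials ms t z)"

lemma cs_monomials_Cons: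
  "cs_monomials ((a, i, j, k) # ms) t z = a * cos t ^ i * sin t ^ j * z ^ k + cs_monomials ms t z"
  by (simp add: cs_monomials_def)

lemma cs_monomials_append: "cs_monomials (ms @ ns) t z = cs_monomials ms t z + cs_monomials ns t z"
  by (simp add: cs_monomials_def)

lemma cs_monomials_product:
  "cs_monomials [(a * b, i + i', j + j', k + k'). (a, i, j, k) \<leftarrow> ms, (b, i', j', k') \<leftarrow> ns] t z
     = cs_monomials ms t z * cs_monomials ns t z"
proof (induction ms)
  case Nil
  then show ?case by (simp add: cs_monomials_def)
next
  case (Cons m ms)
  obtain a i j k where m: "m = (a, i, j, k)" by (cases m)
  have "cs_monomials [(a * b, i + i', j + j', k + k'). (b, i', j', k') \<leftarrow> ns] t z
      = a * cos t ^ i * sin t ^ j * z ^ k * cs_monomials ns t z"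
    by (induction ns) (auto simp: cs_monomials_def power_add algebra_simps)
  with Cons.IH show ?case
    by (simp add: m cs_monomials_append cs_monomials_Cons algebra_simps)
qed

lemma cos_sin_poly_const: "cos_sin_poly (\<lambda>t z. c)"
  unfolding cos_sin_poly_def by (rule exI[of _ "[(c, 0, 0, 0)]"]) (simp add: cs_monomials_def)

lemma cos_sin_poly_cos: "cos_sin_poly (\<lambda>t z. cos t)"
  unfolding cos_sin_poly_def by (rule exI[of _ "[(1, 1, 0, 0)]"]) (simp add: cs_monomials_def)

lemma cos_sin_poly_sin: "cos_sin_poly (\<lambda>t z. sin t)"
  unfolding cos_sin_poly_def by (rule exI[of _ "[(1, 0, 1, 0)]"]) (simp add: cs_monomials_def)

lemma cos_sin_poly_var: "cos_sin_poly (\<lambda>t z. z)"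
  unfolding cos_sin_poly_def by (rule exI[of _ "[(1, 0, 0, 1)]"]) (simp add: cs_monomials_def)

lemma cos_sin_poly_add: "cos_sin_poly f \<Longrightarrow> cos_sin_poly g \<Longrightarrow> cos_sin_poly (\<lambda>t z. f t z + g t z)"
  unfolding cos_sin_poly_def by (metis cs_monomials_append)

lemma cos_sin_poly_mult: "cos_sin_poly f \<Longrightarrow> cos_sin_poly g \<Longrightarrow> cos_sin_poly (\<lambda>t z. f t z * g t z)"
  unfolding cos_sin_poly_def by (metis cs_monomials_product)

lemma cos_sin_poly_diff: "cos_sin_poly f \<Longrightarrow> cos_sin_poly g \<Longrightarrow> cos_sin_poly (\<lambda>t z. f t z - g t z)"
  using cos_sin_poly_add[OF _ cos_sin_poly_mult[OF cos_sin_poly_const, of g "-1"], of f] by simp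

lemma cos_sin_poly_power: "cos_sin_poly f \<Longrightarrow> cos_sin_poly (\<lambda>t z. f t z ^ n)"
  by (induction n) (auto intro: cos_sin_poly_mult cos_sin_poly_const)

lemmas cos_sin_poly_intros =
  cos_sin_poly_const cos_sin_poly_cos cos_sin_poly_sin cos_sin_poly_var
  cos_sin_poly_add cos_sin_poly_diff cos_sin_poly_mult cos_sin_poly_power

lemma grid_sum_delta:
  fixes a :: real
  assumes "i0 \<le> N" "j0 \<le> N" "k0 \<le> N"
  shows "(\<Sum>i\<le>N. \<Sum>j\<le>N. \<Sum>k\<le>N. (if i0 = i \<and> j0 = j \<and> k0 = k then a else 0) * cos t ^ i * sin t ^ j * z ^ k)
    = a * cos t ^ i0 * sin t ^ j0 * z ^ k0"
proof -
  have sum_if: "(\<Sum>x\<le>N. if P then g x else 0) = (if P then \<Sum>x\<le>N. g x else 0)" for P and g :: "nat \<Rightarrow> real"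
    by simp
  have "(if i0 = i \<and> j0 = j \<and> k0 = k then a else 0) * cos t ^ i * sin t ^ j * z ^ k
      = (if i0 = i then if j0 = j then if k0 = k then a * cos t ^ i * sin t ^ j * z ^ k else 0 else 0 else 0)"
    for i j k
    by simp
  then show ?thesis using assms by (simp add: sum_if)
qed

lemma cs_monomials_grid:
  assumes "\<forall>(a, i, j, k)\<in>set ms. i \<le> N \<and> j \<le> N \<and> k \<le> N"
  shows "cs_monomials ms t z = (\<Sum>i\<le>N. \<Sum>j\<le>N. \<Sum>k\<le>N.
    (\<Sum>(a, i', j', k')\<leftarrow>ms. if i' = i \<and> j' = j \<and> k' = k then a else 0) * cos t ^ i * sin t ^ j * z ^ k)"
  using assms
proof (induction ms)
  case Nil
  then show ?case by (simp add: cs_monomials_def)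
next
  case (Cons m ms)
  obtain a i0 j0 k0 where m: "m = (a, i0, j0, k0)" by (cases m)
  have "cs_monomials (m # ms) t z = a * cos t ^ i0 * sin t ^ j0 * z ^ k0 + cs_monomials ms t z"
    by (simp add: m cs_monomials_Cons)
  also have "\<dots> = (\<Sum>i\<le>N. \<Sum>j\<le>N. \<Sum>k\<le>N.
        (if i0 = i \<and> j0 = j \<and> k0 = k then a else 0) * cos t ^ i * sin t ^ j * z ^ k)
      + (\<Sum>i\<le>N. \<Sum>j\<le>N. \<Sum>k\<le>N.
        (\<Sum>(a, i', j', k')\<leftarrow>ms. if i' = i \<and> j' = j \<and> k' = k then a else 0) * cos t ^ i * sin t ^ j * z ^ k)"
    using Cons by (simp add: m grid_sum_delta)
  also have "\<dots> = (\<Sum>i\<le>N. \<Sum>j\<le>N. \<Sum>k\<le>N.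
      (\<Sum>(a, i', j', k')\<leftarrow>m # ms. if i' = i \<and> j' = j \<and> k' = k then a else 0) * cos t ^ i * sin t ^ j * z ^ k)"
    by (simp add: m distrib_right sum.distrib)
  finally show ?case .
qed

lemma cos_sin_poly_grid:
  assumes "cos_sin_poly f"
  shows "\<exists>N c. \<forall>t z. f t z = (\<Sum>i\<le>N. \<Sum>j\<le>N. \<Sum>k\<le>N. c i j k * cos t ^ i * sin t ^ j * z ^ k)"
proof -
  obtain ms where f: "\<forall>t z. f t z = cs_monomials ms t z"
    using assms unfolding cos_sin_poly_def by blast
  define N where "N = Max (insert 0 ((\<lambda>(a, i, j, k). max i (max j k)) ` set ms))"
  have bounds: "\<forall>(a, i, j, k)\<in>set ms. i \<le> N \<and> j \<le> N \<and> k \<le> N"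
  proof clarify
    fix a i j k assume "(a, i, j, k) \<in> set ms"
    then have "max i (max j k) \<le> N"
      unfolding N_def by (intro Max_ge) (auto intro!: image_eqI[where x = "(a, i, j, k)"])
    then show "i \<le> N \<and> j \<le> N \<and> k \<le> N" by simp
  qed
  define c where "c i j k = (\<Sum>(a, i', j', k')\<leftarrow>ms. if i' = i \<and> j' = j \<and> k' = k then a else 0)" for i j k
  from cs_monomials_grid[OF bounds]
  have "\<forall>t z. f t z = (\<Sum>i\<le>N. \<Sum>j\<le>N. \<Sum>k\<le>N. c i j k * cos t ^ i * sin t ^ j * z ^ k)"
    by (simp add: f c_def)
  then show ?thesis by blast
qed

definition quartic_form :: "(nat \<Rightarrow> nat \<Rightarrow> nat \<Rightarrow> real) \<Rightarrow> nat \<Rightarrow> real \<Rightarrow> real \<Rightarrow> real" where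
  "quartic_form a k x y = (\<Sum>i\<in>{0..4::nat}. a k i (4 - i) * x ^ i * y ^ (4 - i))"

lemma quartic_form_expand:
  "quartic_form a k x y = a k 0 4 * y ^ 4 + a k 1 3 * x * y ^ 3 + a k 2 2 * x ^ 2 * y ^ 2
     + a k 3 1 * x ^ 3 * y + a k 4 0 * x ^ 4"
  by (simp add: quartic_form_def atLeast0AtMost numeral_eq_Suc)

lemma quartic_form_scale: "quartic_form a k (r * x) (r * y) = r ^ 4 * quartic_form a k x y"
  unfolding quartic_form_expand power_mult_distrib by algebra

definition radial_part :: "(nat \<Rightarrow> nat \<Rightarrow> nat \<Rightarrow> real) \<Rightarrow> (nat \<Rightarrow> nat \<Rightarrow> nat \<Rightarrow> real) \<Rightarrow> nat \<Rightarrow> real \<Rightarrow> real" where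
  "radial_part a b k \<theta> = cos \<theta> * quartic_form a k (cos \<theta>) (sin \<theta>) + sin \<theta> * quartic_form b k (cos \<theta>) (sin \<theta>)"

definition angular_part :: "(nat \<Rightarrow> nat \<Rightarrow> nat \<Rightarrow> real) \<Rightarrow> (nat \<Rightarrow> nat \<Rightarrow> nat \<Rightarrow> real) \<Rightarrow> nat \<Rightarrow> real \<Rightarrow> real" where
  "angular_part a b k \<theta> = cos \<theta> * quartic_form b k (cos \<theta>) (sin \<theta>) - sin \<theta> * quartic_form a k (cos \<theta>) (sin \<theta>)"

lemma fx_eq: "fx lam a eps x y = - y + x * (x ^ 3 + x * y ^ 2)
    + eps * (lam 1 * x + quartic_form a 1 x y) + eps ^ 2 * (lam 2 * x + quartic_form a 2 x y)"
  by (simp add: fx_def quartic_form_def)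

lemma fy_eq: "fy lam b eps x y = x + y * (x ^ 3 + x * y ^ 2)
    + eps * (lam 1 * y + quartic_form b 1 x y) + eps ^ 2 * (lam 2 * y + quartic_form b 2 x y)"
  by (simp add: fy_def quartic_form_def)

lemma rdot_eq:
  assumes "r \<noteq> 0"
  shows "rdot lam a b eps \<theta> r = r ^ 4 * cos \<theta>
     + eps * (lam 1 * r + r ^ 4 * radial_part a b 1 \<theta>) + eps ^ 2 * (lam 2 * r + r ^ 4 * radial_part a b 2 \<theta>)"
proof -
  have pythagoras: "sin \<theta> ^ 2 + cos \<theta> ^ 2 = 1" by simp
  show ?thesis
    using assms unfolding rdot_def fx_eq fy_eq Let_def quartic_form_scale radial_part_def
    by (simp add: field_simps power_mult_distrib, insert pythagoras, algebra)
qed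

lemma thdot_eq:
  assumes "r \<noteq> 0"
  shows "thdot lam a b eps \<theta> r = 1 + eps * (r ^ 3 * angular_part a b 1 \<theta>) + eps ^ 2 * (r ^ 3 * angular_part a b 2 \<theta>)"
proof -
  have pythagoras: "sin \<theta> ^ 2 + cos \<theta> ^ 2 = 1" by simp
  show ?thesis
    using assms unfolding thdot_def fx_eq fy_eq Let_def quartic_form_scale angular_part_def
    by (simp add: field_simps power_mult_distrib, insert pythagoras, algebra)
qed

lemma deriv_quadratic_quotient_at_0:
  fixes p0 p1 p2 q1 q2 :: real
  shows "deriv (\<lambda>e. (p0 + e * p1 + e ^ 2 * p2) / (1 + e * q1 + e ^ 2 * q2)) 0 = p1 - p0 * q1"
  by (rule DERIV_imp_deriv) (auto intro!: derivative_eq_intros)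

lemma F1_eq:
  assumes "r \<noteq> 0"
  shows "F1 lam a b \<theta> r = lam 1 * r + r ^ 4 * radial_part a b 1 \<theta> - r ^ 7 * cos \<theta> * angular_part a b 1 \<theta>"
  using assms unfolding F1_def rdot_eq[OF assms] thdot_eq[OF assms] deriv_quadratic_quotient_at_0
  by (simp add: algebra_simps)

lemma one_minus_sin_pos:
  fixes z s :: real
  assumes "0 < z" "z ^ 3 < 1/3"
  shows "0 < 1 - 3 * z ^ 3 * sin s"
proof -
  have "z ^ 3 * sin s \<le> z ^ 3" using assms by (simp add: mult_left_le)
  with assms show ?thesis by linarith
qed

definition y1_integrand :: "(nat \<Rightarrow> nat \<Rightarrow> nat \<Rightarrow> real) \<Rightarrow> (nat \<Rightarrow> nat \<Rightarrow> nat \<Rightarrow> real) \<Rightarrow> real \<Rightarrow> real \<Rightarrow> real" where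
  "y1_integrand a b z s =
     z ^ 4 * radial_part a b 1 s - z ^ 7 * cos s * angular_part a b 1 s / (1 - 3 * z ^ 3 * sin s)"

lemma F1_rsol_over_Ysol:
  assumes "lam 1 = 0" and "0 < z" and u: "0 < 1 - 3 * z ^ 3 * sin s"
  shows "F1 lam a b s (rsol s z) / Ysol s z = y1_integrand a b z s"
proof -
  define u where "u = 1 - 3 * z ^ 3 * sin s"
  have "0 < u" using u by (simp add: u_def)
  have rsol: "rsol s z = z * u powr (-1/3)" and Ysol: "Ysol s z = u powr (-4/3)"
    unfolding rsol_def Ysol_def u_def by simp_all
  have rsol_power: "rsol s z ^ n = z ^ n * u powr (- real n / 3)" for n
    using \<open>0 < u\<close> unfolding rsol power_mult_distrib by (simp add: powr_power)
  have "rsol s z ^ 4 = z ^ 4 * u powr (-4/3)"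
    using rsol_power[of 4] by simp
  moreover have "rsol s z ^ 7 = z ^ 7 * u powr (-4/3) / u"
  proof -
    have "u powr (- real 7 / 3) = u powr (-4/3) / u"
      using powr_diff[of u "-4/3" 1] \<open>0 < u\<close> by simp
    then show ?thesis using rsol_power[of 7] by simp
  qed
  moreover have "rsol s z \<noteq> 0" using \<open>0 < z\<close> \<open>0 < u\<close> by (simp add: rsol)
  ultimately show ?thesis
    using assms \<open>0 < u\<close> unfolding F1_eq[OF \<open>rsol s z \<noteq> 0\<close>] Ysol y1_integrand_def u_def[symmetric]
    by (simp add: field_simps)
qed

text \<open>Found by computer algebra. The combinations \<open>k\<close> and \<open>q\<close> are, up to the factors 20 and 180,
  the coefficients of \<open>z\<^sup>0\<close> and \<open>z\<^sup>6\<close> in \<open>m1\<close>.\<close>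

definition antideriv_poly :: "(nat \<Rightarrow> nat \<Rightarrow> nat \<Rightarrow> real) \<Rightarrow> (nat \<Rightarrow> nat \<Rightarrow> nat \<Rightarrow> real) \<Rightarrow> real \<Rightarrow> real \<Rightarrow> real \<Rightarrow> real" where
  "antideriv_poly a b c w z =
    (let k = a 1 2 2 - a 1 0 4 - a 1 4 0 - b 1 1 3 + b 1 3 1;
         q = - a 1 2 2 + 2 * a 1 4 0 + b 1 1 3 - 2 * b 1 3 1
     in 60 * k * w * z ^ 3 + 90 * k * w ^ 2 * z ^ 6 + 180 * k * w ^ 3 * z ^ 9 + 405 * k * w ^ 4 * z ^ 12
        - 1944 * k * w ^ 5 * z ^ 15 + 540 * q * w * z ^ 9 + 810 * q * w ^ 2 * z ^ 12
        + 4860 * (b 1 3 1 + 2 * a 1 4 0) * w * z ^ 15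
        + 1620 * (b 1 3 1 + b 1 1 3 - 4 * a 1 4 0 + 2 * a 1 2 2) * w ^ 3 * z ^ 15
        - 14580 * a 1 1 3 * c * z ^ 15 + 4860 * (a 1 1 3 - a 1 3 1) * c ^ 3 * z ^ 15)"

definition antideriv_poly_dc :: "(nat \<Rightarrow> nat \<Rightarrow> nat \<Rightarrow> real) \<Rightarrow> (nat \<Rightarrow> nat \<Rightarrow> nat \<Rightarrow> real) \<Rightarrow> real \<Rightarrow> real \<Rightarrow> real \<Rightarrow> real" where
  "antideriv_poly_dc a b c w z = - 14580 * a 1 1 3 * z ^ 15 + 14580 * (a 1 1 3 - a 1 3 1) * c ^ 2 * z ^ 15"

definition antideriv_poly_dw :: "(nat \<Rightarrow> nat \<Rightarrow> nat \<Rightarrow> real) \<Rightarrow> (nat \<Rightarrow> nat \<Rightarrow> nat \<Rightarrow> real) \<Rightarrow> real \<Rightarrow> real \<Rightarrow> real \<Rightarrow> real" where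
  "antideriv_poly_dw a b c w z =
    (let k = a 1 2 2 - a 1 0 4 - a 1 4 0 - b 1 1 3 + b 1 3 1;
         q = - a 1 2 2 + 2 * a 1 4 0 + b 1 1 3 - 2 * b 1 3 1
     in 60 * k * z ^ 3 + 180 * k * w * z ^ 6 + 540 * k * w ^ 2 * z ^ 9 + 1620 * k * w ^ 3 * z ^ 12
        - 9720 * k * w ^ 4 * z ^ 15 + 540 * q * z ^ 9 + 1620 * q * w * z ^ 12
        + 4860 * (b 1 3 1 + 2 * a 1 4 0) * z ^ 15
        + 4860 * (b 1 3 1 + b 1 1 3 - 4 * a 1 4 0 + 2 * a 1 2 2) * w ^ 2 * z ^ 15)"

lemma antideriv_poly_has_derivative:
  "((\<lambda>s. antideriv_poly a b (cos s) (sin s) z) has_real_derivative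
     antideriv_poly_dc a b (cos s) (sin s) z * (- sin s) + antideriv_poly_dw a b (cos s) (sin s) z * cos s) (at s)"
  unfolding antideriv_poly_def antideriv_poly_dc_def antideriv_poly_dw_def Let_def
  by (auto intro!: derivative_eq_intros) algebra

text \<open>The derivative of \<open>antideriv\<close> equals \<open>y1_integrand\<close> after clearing the denominator
  \<open>14580 z^11 (1 - 3 z^3 w)\<close>; this is the only place the coefficient conditions enter.\<close>

lemma antideriv_poly_key_identity:
  fixes c w z :: real
  assumes "c ^ 2 + w ^ 2 = 1" and "a 1 1 3 = b 1 0 4" "a 1 3 1 = b 1 2 2" "b 1 4 0 = 0"
  shows "- 3 * z ^ 3 * c * m1 a b z
       + (1 - 3 * z ^ 3 * w) * (antideriv_poly_dc a b c w z * (- w) + antideriv_poly_dw a b c w z * c)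
     = 14580 * z ^ 15 * (1 - 3 * z ^ 3 * w) * (c * quartic_form a 1 c w + w * quartic_form b 1 c w)
       - 14580 * z ^ 18 * c * (c * quartic_form b 1 c w - w * quartic_form a 1 c w)"
  using assms unfolding antideriv_poly_dc_def antideriv_poly_dw_def m1_def quartic_form_expand Let_def
  by algebra

definition antideriv :: "(nat \<Rightarrow> nat \<Rightarrow> nat \<Rightarrow> real) \<Rightarrow> (nat \<Rightarrow> nat \<Rightarrow> nat \<Rightarrow> real) \<Rightarrow> real \<Rightarrow> real \<Rightarrow> real" where
  "antideriv a b z s =
     (m1 a b z * ln (1 - 3 * z ^ 3 * sin s) + antideriv_poly a b (cos s) (sin s) z) / (14580 * z ^ 11)"

lemma antideriv_has_derivative:
  assumes "0 < z" "z ^ 3 < 1/3" and coeffs: "a 1 1 3 = b 1 0 4" "a 1 3 1 = b 1 2 2" "b 1 4 0 = 0"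
  shows "(antideriv a b z has_real_derivative y1_integrand a b z s) (at s)"
proof -
  define c w where "c = cos s" and "w = sin s"
  define u where "u = 1 - 3 * z ^ 3 * w"
  have "0 < u" unfolding u_def w_def using one_minus_sin_pos[OF assms(1,2)] .
  have "(antideriv a b z has_real_derivative
      (m1 a b z * (- 3 * z ^ 3 * c / u)
        + (antideriv_poly_dc a b c w z * (- w) + antideriv_poly_dw a b c w z * c)) / (14580 * z ^ 11)) (at s)"
    unfolding antideriv_def c_def w_def
    by (intro DERIV_cdivide DERIV_add DERIV_cmult antideriv_poly_has_derivative)
      (use \<open>0 < u\<close> in \<open>auto intro!: derivative_eq_intros simp: u_def w_def\<close>)
  also have "(m1 a b z * (- 3 * z ^ 3 * c / u)
        + (antideriv_poly_dc a b c w z * (- w) + antideriv_poly_dw a b c w z * c)) / (14580 * z ^ 11)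
    = (- 3 * z ^ 3 * c * m1 a b z
        + u * (antideriv_poly_dc a b c w z * (- w) + antideriv_poly_dw a b c w z * c)) / (14580 * z ^ 11 * u)"
    using \<open>0 < u\<close> by (simp add: field_simps)
  also have "\<dots> = (14580 * z ^ 15 * u * (c * quartic_form a 1 c w + w * quartic_form b 1 c w)
       - 14580 * z ^ 18 * c * (c * quartic_form b 1 c w - w * quartic_form a 1 c w)) / (14580 * z ^ 11 * u)"
    unfolding u_def by (subst antideriv_poly_key_identity) (use coeffs in \<open>simp_all add: c_def w_def\<close>)
  also have "\<dots> = y1_integrand a b z s"
    using \<open>0 < u\<close> \<open>0 < z\<close>
    unfolding y1_integrand_def radial_part_def angular_part_def c_def[symmetric] w_def[symmetric] u_def[symmetric]
    by (simp add: field_simps) algebra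
  finally show ?thesis .
qed

lemma integral_y1_integrand:
  assumes "0 < z" "z ^ 3 < 1/3" and coeffs: "a 1 1 3 = b 1 0 4" "a 1 3 1 = b 1 2 2" "b 1 4 0 = 0"
  shows "(LBINT s=0..\<theta>. y1_integrand a b z s) = antideriv a b z \<theta> - antideriv a b z 0"
  unfolding zero_ereal_def
proof (rule interval_integral_FTC_finite)
  have "1 - 3 * z ^ 3 * sin s \<noteq> 0" for s
    using one_minus_sin_pos[OF assms(1,2)] by (metis less_irrefl)
  then show "continuous_on {min 0 \<theta>..max 0 \<theta>} (y1_integrand a b z)"
    unfolding y1_integrand_def radial_part_def angular_part_def quartic_form_expand
    by (intro continuous_intros) auto
  show "(antideriv a b z has_vector_derivative y1_integrand a b z s) (at s within {min 0 \<theta>..max 0 \<theta>})" for s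
    using antideriv_has_derivative[where a = a and b = b, OF assms]
    by (simp add: has_real_derivative_iff_has_vector_derivative[symmetric] has_field_derivative_at_within)
qed

lemma y1_closed_form:
  assumes "lam 1 = 0" and "0 < z" "z ^ 3 < 1/3" and coeffs: "a 1 1 3 = b 1 0 4" "a 1 3 1 = b 1 2 2" "b 1 4 0 = 0"
  shows "y1 lam a b \<theta> z =
    1 / (14580 * z ^ 11 * (1 - 3 * z ^ 3 * sin \<theta>) powr (4/3))
    * (m1 a b z * ln (1 - 3 * z ^ 3 * sin \<theta>)
       + (antideriv_poly a b (cos \<theta>) (sin \<theta>) z - antideriv_poly a b 1 0 z))"
proof -
  have "(\<lambda>s. F1 lam a b s (rsol s z) / Ysol s z) = y1_integrand a b z"
    by (intro ext F1_rsol_over_Ysol assms(1,2) one_minus_sin_pos assms(2,3))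
  then have "y1 lam a b \<theta> z = Ysol \<theta> z * (antideriv a b z \<theta> - antideriv a b z 0)"
    unfolding y1_def using integral_y1_integrand[where a = a and b = b, OF assms(2-)] by simp
  also have "antideriv a b z \<theta> - antideriv a b z 0 = (m1 a b z * ln (1 - 3 * z ^ 3 * sin \<theta>)
      + (antideriv_poly a b (cos \<theta>) (sin \<theta>) z - antideriv_poly a b 1 0 z)) / (14580 * z ^ 11)"
    by (simp add: antideriv_def diff_divide_distrib add_divide_distrib)
  finally show ?thesis
    by (simp add: Ysol_def powr_minus field_simps)
qed

lemma cube_root_third_cubed: "((3::real) powr (-1/3)) ^ 3 = 1/3"
proof -
  have "((3::real) powr (-1/3)) ^ 3 = 3 powr (- 1)" by (simp add: powr_power)
  then show ?thesis by (simp add: powr_minus_divide)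
qed

lemma cube_lt_third:
  fixes z :: real
  assumes "z \<in> {0<..<3 powr (-1/3)}"
  shows "z ^ 3 < 1/3"
proof -
  have "z ^ 3 < (3 powr (-1/3)) ^ 3" using assms by (intro power_strict_mono) auto
  then show ?thesis by (simp only: cube_root_third_cubed)
qed

lemma half_lt_cube_root_third: "(1/2::real) < 3 powr (-1/3)"
proof (rule power_less_imp_less_base)
  show "(1/2) ^ 3 < ((3::real) powr (-1/3)) ^ 3" by (simp only: cube_root_third_cubed) (simp add: power3_eq_cube)
qed simp

lemma m1_vanishes_iff:
  "(\<forall>z \<in> {0<..<3 powr (-1/3)}. m1 a b z = 0) \<longleftrightarrow> (a 1 2 2 = b 1 1 3 \<and> a 1 4 0 = b 1 3 1 \<and> a 1 0 4 = 0)"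
proof
  define p q r where "p = b 1 3 1 - a 1 4 0" and "q = - a 1 2 2 + 2 * a 1 4 0 + b 1 1 3 - 2 * b 1 3 1"
    and "r = a 1 2 2 - a 1 0 4 - a 1 4 0 - b 1 1 3 + b 1 3 1"
  have m1: "m1 a b z = 1620 * p * (z ^ 6) ^ 2 + 180 * q * z ^ 6 + 20 * r" for z
    by (simp add: m1_def p_def q_def r_def flip: power_mult)
  assume "\<forall>z \<in> {0<..<3 powr (-1/3)}. m1 a b z = 0"
  then have "m1 a b (1/2) = 0" "m1 a b (1/3) = 0" "m1 a b (1/4) = 0"
    using half_lt_cube_root_third by auto
  then have "1620 * p / 4096 + 180 * q / 64 + 20 * r = 0"
    and "1620 * p / 531441 + 180 * q / 729 + 20 * r = 0"
    and "1620 * p / 16777216 + 180 * q / 4096 + 20 * r = 0"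
    unfolding m1 by (simp_all add: power_divide)
  then have "p = 0" "q = 0" "r = 0" by linarith+
  then show "a 1 2 2 = b 1 1 3 \<and> a 1 4 0 = b 1 3 1 \<and> a 1 0 4 = 0"
    unfolding p_def q_def r_def by linarith
next
  assume "a 1 2 2 = b 1 1 3 \<and> a 1 4 0 = b 1 3 1 \<and> a 1 0 4 = 0"
  then show "\<forall>z \<in> {0<..<3 powr (-1/3)}. m1 a b z = 0" by (simp add: m1_def)
qed

theorem mainTheorem9:
  fixes lam :: "nat \<Rightarrow> real" and a b :: "nat \<Rightarrow> nat \<Rightarrow> nat \<Rightarrow> real"
  assumes "a 1 1 3 = b 1 0 4" and "a 1 3 1 = b 1 2 2" and "b 1 4 0 = 0" and "lam 1 = 0"
  shows "(\<exists>(N::nat) (c :: nat \<Rightarrow> nat \<Rightarrow> nat \<Rightarrow> real).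
            \<forall>z \<in> {0 <..< 3 powr (-1/3)}. \<forall>\<theta>::real.
              y1 lam a b \<theta> z =
                1 / (14580 * z ^ 11 * (1 - 3 * z ^ 3 * sin \<theta>) powr (4/3))
                * (m1 a b z * ln (1 - 3 * z ^ 3 * sin \<theta>)
                   + (\<Sum>i\<le>N. \<Sum>j\<le>N. \<Sum>k\<le>N. c i j k * cos \<theta> ^ i * sin \<theta> ^ j * z ^ k)))
         \<and> ((\<forall>z \<in> {0 <..< 3 powr (-1/3)}. m1 a b z = 0) \<longleftrightarrow>
              (a 1 2 2 = b 1 1 3 \<and> a 1 4 0 = b 1 3 1 \<and> a 1 0 4 = 0))"
proof -
  have "cos_sin_poly (\<lambda>\<theta> z. antideriv_poly a b (cos \<theta>) (sin \<theta>) z - antideriv_poly a b 1 0 z)"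
    unfolding antideriv_poly_def Let_def by (intro cos_sin_poly_intros)
  then obtain N c where R: "\<And>\<theta> z. antideriv_poly a b (cos \<theta>) (sin \<theta>) z - antideriv_poly a b 1 0 z
      = (\<Sum>i\<le>N. \<Sum>j\<le>N. \<Sum>k\<le>N. c i j k * cos \<theta> ^ i * sin \<theta> ^ j * z ^ k)"
    using cos_sin_poly_grid by blast
  have "y1 lam a b \<theta> z =
      1 / (14580 * z ^ 11 * (1 - 3 * z ^ 3 * sin \<theta>) powr (4/3))
      * (m1 a b z * ln (1 - 3 * z ^ 3 * sin \<theta>)
         + (\<Sum>i\<le>N. \<Sum>j\<le>N. \<Sum>k\<le>N. c i j k * cos \<theta> ^ i * sin \<theta> ^ j * z ^ k))"
    if "z \<in> {0<..<3 powr (-1/3)}" for z \<theta>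
    using y1_closed_form[where lam = lam and a = a and b = b, OF assms(4) _ cube_lt_third assms(1-3)] that
    by (simp add: R)
  with m1_vanishes_iff show ?thesis by blast
qed

end
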